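(* In any execution of \textsf{Murmur} (described in the context) in which the correct gossip network is connected, \textsf{Murmur} satisfies totality: if some correct process delivers a message, then every correct process eventually delivers a message.
   Context: System model: a fixed set $\Pi$ of processes, some Byzantine and the rest correct ($\Pi_C$ denotes the correct ones), communicating asynchronously over reliable authenticated point-to-point links (every message between correct processes is eventually delivered); signatures cannot be forged; a designated sender $\sigma$ with a public key. \textsf{Murmur} (parameter $G$): upon initialization each correct process samples $\bar G$ from a Poisson distribution with mean $G$, chooses $\bar G$ distinct processes uniformly at random as its gossip sample, and sends GossipSubscribe to each. Upon receiving GossipSubscribe from $\pi$, a correct process adds $\pi$ to its gossip sample and, if it has already set its variable $delivered$ to some (message, signature) pair, sends $\pi$ a Gossip message with that pair. Procedure dispatch(message, signature): if $delivered=\bot$, set $delivered$ to the pair, send a Gossip message with the pair to every process in the gossip sample, and deliver the message. The sender broadcasts $m$ by calling dispatch$(m,\mathrm{sign}_\sigma(m))$; upon receiving a Gossip message whose signature verifies against $\sigma$'s key, a correct process calls dispatch on it. The correct gossip network is the undirected graph with vertex set $\Pi_C$ in which correct $\pi,\rho$ are adjacent iff $\rho$ is eventually in $\pi$'s gossip sample (this relation is symmetric). *)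

theory Defs
  imports Main
begin

text \<open>Abstract operational model of the Murmur protocol (parameter G only
affects the random size of the initial gossip sample; totality must hold for
every outcome of the random choices, so the initial sample is an arbitrary
finite subset of the process set).\<close>

datatype ('m, 's) content = Subscribe | Gossip 'm 's

text \<open>A network message: (sender, receiver, content).  Links are authenticated,
so the sender field of a message is the true sender.\<close>
type_synonym ('p, 'm, 's) netmsg = "'p \<times> 'p \<times> ('m, 's) content"

record ('p, 'm, 's) config =
  smp   :: "'p \<Rightarrow> 'p set"
  deliv :: "'p \<Rightarrow> ('m \<times> 's) option"
  sent  :: "('p, 'm, 's) netmsg set"
  rcvd  :: "('p, 'm, 's) netmsg set"

text \<open>Procedure dispatch at process p with (message, signature) pair d.
Delivery of the message happens exactly when delivered is set.\<close>
definition dispatch :: "'p \<Rightarrow> 'm \<times> 's \<Rightarrow> ('p, 'm, 's) config \<Rightarrow> ('p, 'm, 's) config" where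
  "dispatch p d c =
    (if deliv c p = None
     then c\<lparr>deliv := (deliv c)(p := Some d),
            sent := sent c \<union> {(p, r, Gossip (fst d) (snd d)) | r. r \<in> smp c p}\<rparr>
     else c)"

definition init_config ::
  "'p set \<Rightarrow> 'p set \<Rightarrow> ('p, 'm, 's) config \<Rightarrow> bool" where
  "init_config Pi C c \<longleftrightarrow>
     (\<forall>p\<in>C. finite (smp c p) \<and> smp c p \<subseteq> Pi \<and> deliv c p = None) \<and>
     sent c = {(p, r, Subscribe) | p r. p \<in> C \<and> r \<in> smp c p} \<and>
     rcvd c = {}"

text \<open>One step of an execution.  verify m s: s verifies against the sender's
public key; sign m: the sender's signature on m.\<close>
definition murmur_step ::
  "'p set \<Rightarrow> 'p set \<Rightarrow> 'p \<Rightarrow> ('m \<Rightarrow> 's \<Rightarrow> bool) \<Rightarrow> ('m \<Rightarrow> 's)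
   \<Rightarrow> ('p, 'm, 's) config \<Rightarrow> ('p, 'm, 's) config \<Rightarrow> bool" where
  "murmur_step Pi C sndr verify sign c c' \<longleftrightarrow>
     \<comment> \<open>no event\<close>
     c' = c
     \<comment> \<open>correct sender broadcasts m\<close>
   \<or> (\<exists>m. sndr \<in> C \<and> c' = dispatch sndr (m, sign m) c)
     \<comment> \<open>correct p receives GossipSubscribe from r\<close>
   \<or> (\<exists>p r. p \<in> C \<and> (r, p, Subscribe) \<in> sent c \<and> (r, p, Subscribe) \<notin> rcvd c \<and>
        (let c1 = c\<lparr>rcvd := insert (r, p, Subscribe) (rcvd c),
                    smp := (smp c)(p := insert r (smp c p))\<rparr>
         in c' = (case deliv c p of
                    None \<Rightarrow> c1
                  | Some (m, s) \<Rightarrow> c1\<lparr>sent := insert (p, r, Gossip m s) (sent c1)\<rparr>)))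
     \<comment> \<open>correct p receives Gossip (m, s) from r\<close>
   \<or> (\<exists>p r m s. p \<in> C \<and> (r, p, Gossip m s) \<in> sent c \<and> (r, p, Gossip m s) \<notin> rcvd c \<and>
        (let c1 = c\<lparr>rcvd := insert (r, p, Gossip m s) (rcvd c)\<rparr>
         in c' = (if verify m s then dispatch p (m, s) c1 else c1)))
     \<comment> \<open>a Byzantine process sends an arbitrary message; it cannot forge the
         signature of a correct sender\<close>
   \<or> (\<exists>b r x. b \<in> Pi - C \<and> r \<in> Pi \<and>
        (case x of
           Subscribe \<Rightarrow> True
         | Gossip m s \<Rightarrow> (verify m s \<and> sndr \<in> C \<longrightarrow> (\<exists>a a'. (a, a', Gossip m s) \<in> sent c))) \<and>
        c' = c\<lparr>sent := insert (b, r, x) (sent c)\<rparr>)"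

definition reliable ::
  "'p set \<Rightarrow> (nat \<Rightarrow> ('p, 'm, 's) config) \<Rightarrow> bool" where
  "reliable C ex \<longleftrightarrow>
     (\<forall>p r x t. p \<in> C \<and> r \<in> C \<and> (p, r, x) \<in> sent (ex t) \<longrightarrow> (\<exists>t'. (p, r, x) \<in> rcvd (ex t')))"

definition murmur_execution ::
  "'p set \<Rightarrow> 'p set \<Rightarrow> 'p \<Rightarrow> ('m \<Rightarrow> 's \<Rightarrow> bool) \<Rightarrow> ('m \<Rightarrow> 's)
   \<Rightarrow> (nat \<Rightarrow> ('p, 'm, 's) config) \<Rightarrow> bool" where
  "murmur_execution Pi C sndr verify sign ex \<longleftrightarrow>
     init_config Pi C (ex 0) \<and>
     (\<forall>t. murmur_step Pi C sndr verify sign (ex t) (ex (Suc t))) \<and>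
     reliable C ex"

definition gossip_adj :: "'p set \<Rightarrow> (nat \<Rightarrow> ('p, 'm, 's) config) \<Rightarrow> 'p \<Rightarrow> 'p \<Rightarrow> bool" where
  "gossip_adj C ex p r \<longleftrightarrow> p \<in> C \<and> r \<in> C \<and>
     ((\<exists>t. r \<in> smp (ex t) p) \<or> (\<exists>t. p \<in> smp (ex t) r))"

definition gossip_connected :: "'p set \<Rightarrow> (nat \<Rightarrow> ('p, 'm, 's) config) \<Rightarrow> bool" where
  "gossip_connected C ex \<longleftrightarrow> (\<forall>p\<in>C. \<forall>r\<in>C. (gossip_adj C ex)\<^sup>*\<^sup>* p r)"

definition delivers :: "(nat \<Rightarrow> ('p, 'm, 's) config) \<Rightarrow> 'p \<Rightarrow> bool" where
  "delivers ex p \<longleftrightarrow> (\<exists>t. deliv (ex t) p \<noteq> None)"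

end

theory Submission
  imports Defs
begin

text \<open>Delivery spreads along every edge of the correct gossip network.  A sample
edge is eventually present in both directions, because receiving a subscription
puts the subscriber into the sample.  Once a correct p has delivered (m, s) and
r is in p's sample, p has sent Gossip (m, s) to r, either when dispatching or
when answering r's subscription; the pair verifies, since correct processes only
dispatch the sender's own signature or verified pairs, so r dispatches it on
reception.  Connectivity then carries delivery to every correct process.\<close>

lemma smp_dispatch [simp]: "smp (dispatch p d c) = smp c"
  by (simp add: dispatch_def)

lemma rcvd_dispatch [simp]: "rcvd (dispatch p d c) = rcvd c"
  by (simp add: dispatch_def)

lemma deliv_dispatch [simp]:
  "deliv (dispatch p d c) = (if deliv c p = None then (deliv c)(p := Some d) else deliv c)"
  by (simp add: dispatch_def)

lemma sent_dispatch [simp]: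
  "sent (dispatch p d c) =
    (if deliv c p = None then sent c \<union> {(p, r, Gossip (fst d) (snd d)) | r. r \<in> smp c p}
     else sent c)"
  by (simp add: dispatch_def)

lemma murmur_step_cases [consumes 1, case_names idle broadcast subscribe subscribe_delivered
    gossip_valid gossip_invalid byzantine]:
  assumes "murmur_step Pi C sndr verify sign c c'"
  obtains "c' = c"
  | m where "sndr \<in> C" "c' = dispatch sndr (m, sign m) c"
  | p r where "p \<in> C" "(r, p, Subscribe) \<in> sent c" "deliv c p = None"
      "c' = c\<lparr>rcvd := insert (r, p, Subscribe) (rcvd c), smp := (smp c)(p := insert r (smp c p))\<rparr>"
  | p r m s where "p \<in> C" "(r, p, Subscribe) \<in> sent c" "deliv c p = Some (m, s)"
      "c' = c\<lparr>rcvd := insert (r, p, Subscribe) (rcvd c), smp := (smp c)(p := insert r (smp c p)),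
              sent := insert (p, r, Gossip m s) (sent c)\<rparr>"
  | p r m s where "p \<in> C" "(r, p, Gossip m s) \<in> sent c" "verify m s"
      "c' = dispatch p (m, s) (c\<lparr>rcvd := insert (r, p, Gossip m s) (rcvd c)\<rparr>)"
  | p r m s where "(r, p, Gossip m s) \<in> sent c" "\<not> verify m s"
      "c' = c\<lparr>rcvd := insert (r, p, Gossip m s) (rcvd c)\<rparr>"
  | b r x where "b \<notin> C" "c' = c\<lparr>sent := insert (b, r, x) (sent c)\<rparr>"
  using assms unfolding murmur_step_def Let_def
  by (elim disjE exE conjE) (auto split: option.split_asm prod.split_asm if_split_asm)

lemma murmur_step_deliv_mono:
  "murmur_step Pi C sndr verify sign c c' \<Longrightarrow> deliv c \<subseteq>\<^sub>m deliv c'"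
  by (erule murmur_step_cases) (auto simp: map_le_def)

lemma murmur_step_smp_mono:
  "murmur_step Pi C sndr verify sign c c' \<Longrightarrow> smp c p \<subseteq> smp c' p"
  by (erule murmur_step_cases) auto

definition murmur_invariant ::
  "'p set \<Rightarrow> ('m \<Rightarrow> 's \<Rightarrow> bool) \<Rightarrow> ('p, 'm, 's) config \<Rightarrow> bool" where
  "murmur_invariant C verify c \<longleftrightarrow>
     rcvd c \<subseteq> sent c \<and>
     (\<forall>p q. p \<in> C \<longrightarrow> (p, q, Subscribe) \<in> sent c \<longrightarrow> q \<in> smp c p) \<and>
     (\<forall>p q. p \<in> C \<longrightarrow> q \<in> smp c p \<longrightarrow> (p, q, Subscribe) \<in> sent c \<or> (q, p, Subscribe) \<in> rcvd c) \<and>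
     (\<forall>p q. (q, p, Subscribe) \<in> rcvd c \<longrightarrow> q \<in> smp c p) \<and>
     (\<forall>p m s. p \<in> C \<longrightarrow> deliv c p = Some (m, s) \<longrightarrow> verify m s) \<and>
     (\<forall>p q m s. p \<in> C \<longrightarrow> deliv c p = Some (m, s) \<longrightarrow> q \<in> smp c p \<longrightarrow>
        (p, q, Gossip m s) \<in> sent c) \<and>
     (\<forall>q p m s. (q, p, Gossip m s) \<in> rcvd c \<longrightarrow> verify m s \<longrightarrow> deliv c p \<noteq> None)"

lemma init_config_murmur_invariant:
  "init_config Pi C c \<Longrightarrow> murmur_invariant C verify c"
  by (auto simp: init_config_def murmur_invariant_def)

lemma murmur_step_murmur_invariant:
  assumes "murmur_step Pi C sndr verify sign c c'" and "\<forall>m. verify m (sign m)"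
    and "murmur_invariant C verify c"
  shows "murmur_invariant C verify c'"
  using assms by (elim murmur_step_cases) (auto simp: murmur_invariant_def)

lemma murmur_execution_step:
  "murmur_execution Pi C sndr verify sign ex \<Longrightarrow> murmur_step Pi C sndr verify sign (ex t) (ex (Suc t))"
  by (simp add: murmur_execution_def)

lemma murmur_execution_deliv_mono:
  assumes "murmur_execution Pi C sndr verify sign ex" and "t \<le> t'"
  shows "deliv (ex t) \<subseteq>\<^sub>m deliv (ex t')"
  using assms(2)
proof (rule transitive_stepwise_le)
  show "deliv (ex t) \<subseteq>\<^sub>m deliv (ex (Suc t))" for t
    by (rule murmur_step_deliv_mono[OF murmur_execution_step[OF assms(1)]])
qed (auto intro: map_le_trans)

lemma murmur_execution_smp_mono:
  assumes "murmur_execution Pi C sndr verify sign ex" and "t \<le> t'"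
  shows "smp (ex t) p \<subseteq> smp (ex t') p"
proof (rule lift_Suc_mono_le[of "\<lambda>t. smp (ex t) p", OF _ assms(2)])
  show "smp (ex t) p \<subseteq> smp (ex (Suc t)) p" for t
    by (rule murmur_step_smp_mono[OF murmur_execution_step[OF assms(1)]])
qed

lemma murmur_execution_invariant:
  assumes "murmur_execution Pi C sndr verify sign ex" and "\<forall>m. verify m (sign m)"
  shows "murmur_invariant C verify (ex t)"
proof (induction t)
  case 0
  show ?case
    using assms(1) by (auto simp: murmur_execution_def intro: init_config_murmur_invariant)
next
  case (Suc t)
  show ?case
    by (rule murmur_step_murmur_invariant[OF murmur_execution_step[OF assms(1)] assms(2) Suc.IH])
qed

lemma murmur_execution_received:
  assumes "murmur_execution Pi C sndr verify sign ex" and "p \<in> C" and "r \<in> C"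
    and "(p, r, x) \<in> sent (ex t)"
  obtains t' where "(p, r, x) \<in> rcvd (ex t')"
  using assms unfolding murmur_execution_def reliable_def by blast

lemma sample_eventually_symmetric:
  assumes E: "murmur_execution Pi C sndr verify sign ex" and V: "\<forall>m. verify m (sign m)"
    and "p \<in> C" and "r \<in> C" and "p \<in> smp (ex t) r"
  obtains t' where "r \<in> smp (ex t') p"
proof -
  have inv: "murmur_invariant C verify (ex t')" for t'
    using E V by (rule murmur_execution_invariant)
  then consider "(r, p, Subscribe) \<in> sent (ex t)" | "(p, r, Subscribe) \<in> rcvd (ex t)"
    using assms(4,5) unfolding murmur_invariant_def by blast
  then show thesis
  proof cases
    case 1
    obtain t' where "(r, p, Subscribe) \<in> rcvd (ex t')"
      by (rule murmur_execution_received[OF E assms(4,3) 1])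
    then show thesis
      using inv[of t'] that unfolding murmur_invariant_def by blast
  next
    case 2
    then show thesis
      using inv[of t] assms(3) that unfolding murmur_invariant_def by blast
  qed
qed

lemma delivers_along_sample:
  assumes E: "murmur_execution Pi C sndr verify sign ex" and V: "\<forall>m. verify m (sign m)"
    and "p \<in> C" and "r \<in> C" and "r \<in> smp (ex t) p" and "delivers ex p"
  shows "delivers ex r"
proof -
  have inv: "murmur_invariant C verify (ex t')" for t'
    using E V by (rule murmur_execution_invariant)
  obtain t1 m s where "deliv (ex t1) p = Some (m, s)"
    using assms(6) by (auto simp: delivers_def)
  then have "deliv (ex (max t1 t)) p = Some (m, s)"
    using murmur_execution_deliv_mono[OF E, of t1 "max t1 t"] by (auto simp: map_le_def dom_def)
  moreover have "r \<in> smp (ex (max t1 t)) p"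
    using murmur_execution_smp_mono[OF E, of t "max t1 t"] assms(5) by auto
  ultimately have sent: "(p, r, Gossip m s) \<in> sent (ex (max t1 t))" and "verify m s"
    using inv assms(3) unfolding murmur_invariant_def by blast+
  obtain t' where "(p, r, Gossip m s) \<in> rcvd (ex t')"
    by (rule murmur_execution_received[OF E assms(3,4) sent])
  with \<open>verify m s\<close> have "deliv (ex t') r \<noteq> None"
    using inv[of t'] unfolding murmur_invariant_def by blast
  then show ?thesis
    by (auto simp: delivers_def)
qed

lemma delivers_along_gossip_adj:
  assumes "murmur_execution Pi C sndr verify sign ex" and "\<forall>m. verify m (sign m)"
    and "gossip_adj C ex p r" and "delivers ex p"
  shows "delivers ex r"
proof -
  from assms(3) have "p \<in> C" and "r \<in> C" and "(\<exists>t. r \<in> smp (ex t) p) \<or> (\<exists>t. p \<in> smp (ex t) r)"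
    unfolding gossip_adj_def by blast+
  then obtain t where "r \<in> smp (ex t) p"
    using sample_eventually_symmetric[OF assms(1,2) \<open>p \<in> C\<close> \<open>r \<in> C\<close>] by blast
  then show ?thesis
    by (rule delivers_along_sample[OF assms(1,2) \<open>p \<in> C\<close> \<open>r \<in> C\<close> _ assms(4)])
qed

theorem lemma2:
  fixes Pi C :: "'p set" and sndr :: 'p
    and verify :: "'m \<Rightarrow> 's \<Rightarrow> bool" and sign :: "'m \<Rightarrow> 's"
    and ex :: "nat \<Rightarrow> ('p, 'm, 's) config"
  assumes "finite Pi" and "C \<subseteq> Pi" and "sndr \<in> Pi"
    and "\<forall>m. verify m (sign m)"
    and "murmur_execution Pi C sndr verify sign ex"
    and "gossip_connected C ex"
  shows "(\<exists>p\<in>C. delivers ex p) \<longrightarrow> (\<forall>r\<in>C. delivers ex r)"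
proof (intro impI ballI)
  fix r assume "\<exists>p\<in>C. delivers ex p" and "r \<in> C"
  then obtain p where "p \<in> C" and "delivers ex p" by blast
  from \<open>p \<in> C\<close> \<open>r \<in> C\<close> assms(6) have "(gossip_adj C ex)\<^sup>*\<^sup>* p r"
    by (simp add: gossip_connected_def)
  then show "delivers ex r"
    by induction (auto intro: \<open>delivers ex p\<close> delivers_along_gossip_adj[OF assms(5,4)])
qed

end
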